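(* Let $N\ge 1$, let $p$ range over a set of parameters in $\mathbb{R}^m$, and let $\varepsilon>0$ be a distinguished parameter. Consider the first-order linear system $$W'=A^p(x;\varepsilon)W:=M^p(x;\varepsilon)W+\Theta^p(x;\varepsilon)W,\qquad x\le 0,\quad W\in\mathbb{C}^N,$$ where $'=d/dx$ and $M^p,\Theta^p$ are $N\times N$ complex matrix-valued functions of $x$, satisfying, for some constants $C,\theta>0$ independent of $p$, $\varepsilon$ and $x$, and some scalars $\delta^p(\varepsilon)\ge 0$, $$|\Theta^p(x;\varepsilon)|\le C\varepsilon^2 e^{-\theta\varepsilon|x|},\qquad |\operatorname{Re} M^p(x;\varepsilon)|\le \varepsilon\,\delta^p(\varepsilon)+C\varepsilon e^{-\theta\varepsilon|x|}\quad\text{for all } x\le 0,$$ where $\operatorname{Re}M:=\tfrac12(M+M^* )$. Then there exists $\delta_*>0$ such that, whenever $\delta^p(\varepsilon)\le\delta_*$ and $\varepsilon>0$ is sufficiently small, there exists an invertible linear transformation $P^p(x,\varepsilon)=I+\Psi^p(x,\varepsilon)$ defined on $x\le 0$ with $$|\Psi^p(x,\varepsilon)|\le C_1\varepsilon e^{-\theta\varepsilon|x|/2}\quad\text{for } x\le 0$$ (for some constant $C_1>0$), such that the change of coordinates $W=P^pZ$ reduces $W'=A^pW$ to $Z'=M^pZ$.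
   Context: $M^*$ denotes the conjugate transpose of $M$, and $|\cdot|$ a matrix norm. *)

theory Defs
  imports "HOL-Analysis.Analysis"
begin

definition adjoint_mat :: "complex^'n^'n \<Rightarrow> complex^'n^'n" where
  "adjoint_mat M = (\<chi> i j. cnj (M $ j $ i))"

definition Re_mat :: "complex^'n^'n \<Rightarrow> complex^'n^'n" where
  "Re_mat M = (1/2::real) *\<^sub>R (M + adjoint_mat M)"

end

theory Submission
  imports Defs
begin

text \<open>Let \<open>\<Phi>\<close> solve \<open>\<Phi>' = M \<Phi>\<close>, \<open>\<Phi>(0) = I\<close>, and \<open>Z = \<Phi>\<^sup>-\<^sup>1\<close>. Only the Hermitian part of \<open>M\<close>
  contributes to the growth of \<open>|\<Phi>(x) Z(y)|\<^sup>2\<close>, so the hypothesis on \<open>Re M\<close> gives the two-point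
  bound \<open>|\<Phi>(x) Z(y)| \<le> K exp(\<epsilon> \<delta> |x - y|)\<close> with \<open>K\<close> independent of \<open>\<epsilon>\<close>. Writing \<open>W = \<Phi> V\<close> turns
  the perturbed system into \<open>V' = B V\<close> with \<open>B = Z \<Theta> \<Phi>\<close>, and \<open>|B(x)| \<le> K\<^sup>2 C \<epsilon>\<^sup>2 exp(\<theta> \<epsilon> x / 2)\<close>
  once \<open>\<delta> \<le> \<theta>/4\<close>. For small \<open>\<epsilon>\<close> the mass of \<open>B\<close> is small, so \<open>V' = B V\<close> has a bounded solution
  \<open>U\<close> with \<open>U(-\<infinity>) = I\<close>. Then \<open>P = \<Phi> U Z\<close> satisfies \<open>P' = A P - P M\<close>, and
  \<open>P(x) - I = \<integral> \<Phi>(x) Z(s) \<Theta>(s) \<Phi>(s) U(s) Z(x) ds\<close> over \<open>s < x\<close> is \<open>O(\<epsilon> exp(\<theta> \<epsilon> x / 2))\<close>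
  by the two-point bound.\<close>

section \<open>Frobenius norm of complex matrices\<close>

lemma norm_vec_squared: "norm (x::complex^'n) ^ 2 = (\<Sum>i\<in>UNIV. (cmod (x$i))^2)"
  by (simp add: norm_vec_def L2_set_def sum_nonneg)

lemma norm_matrix_squared: "norm (A::complex^'n^'m) ^ 2 = (\<Sum>i\<in>UNIV. \<Sum>j\<in>UNIV. (cmod (A$i$j))^2)"
  by (simp add: norm_vec_def L2_set_def sum_nonneg)

lemma cmod_sum_mult_squared_le:
  "(cmod (\<Sum>k\<in>K. a k * b k))^2 \<le> (\<Sum>k\<in>K. (cmod (a k))^2) * (\<Sum>k\<in>K. (cmod (b k))^2)"
proof -
  have "cmod (\<Sum>k\<in>K. a k * b k) \<le> (\<Sum>k\<in>K. cmod (a k) * cmod (b k))"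
    by (simp add: norm_mult order_trans[OF norm_sum])
  then have "(cmod (\<Sum>k\<in>K. a k * b k))^2 \<le> (\<Sum>k\<in>K. cmod (a k) * cmod (b k))^2"
    by (simp add: power_mono)
  also have "\<dots> \<le> (\<Sum>k\<in>K. (cmod (a k))^2) * (\<Sum>k\<in>K. (cmod (b k))^2)"
    by (rule Cauchy_Schwarz_ineq_sum)
  finally show ?thesis .
qed

lemma norm_matrix_mult_le: "norm ((A::complex^'k^'m) ** (B::complex^'n^'k)) \<le> norm A * norm B"
proof -
  have "norm (A ** B) ^ 2 \<le> (\<Sum>i\<in>UNIV. \<Sum>j\<in>UNIV. (\<Sum>k\<in>UNIV. (cmod (A$i$k))^2) * (\<Sum>k\<in>UNIV. (cmod (B$k$j))^2))"
    unfolding norm_matrix_squared matrix_matrix_mult_def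
    by (intro sum_mono) (simp add: cmod_sum_mult_squared_le)
  also have "\<dots> = (\<Sum>i\<in>UNIV. \<Sum>k\<in>UNIV. (cmod (A$i$k))^2) * (\<Sum>j\<in>UNIV. \<Sum>k\<in>UNIV. (cmod (B$k$j))^2)"
    by (simp add: sum_product)
  also have "\<dots> = (norm A * norm B)^2"
  proof -
    have "(norm B)^2 = (\<Sum>j\<in>UNIV. \<Sum>k\<in>UNIV. (cmod (B$k$j))^2)"
      unfolding norm_matrix_squared by (rule sum.swap)
    then show ?thesis by (simp add: norm_matrix_squared power_mult_distrib)
  qed
  finally show ?thesis
    by (rule power2_le_imp_le) simp
qed

lemma norm_matrix_vector_mult_le: "norm ((A::complex^'n^'m) *v x) \<le> norm A * norm x"
proof -
  have "norm (A *v x) ^ 2 \<le> (\<Sum>i\<in>UNIV. (\<Sum>k\<in>UNIV. (cmod (A$i$k))^2) * (\<Sum>k\<in>UNIV. (cmod (x$k))^2))"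
    unfolding norm_vec_squared matrix_vector_mult_def
    by (intro sum_mono) (simp add: cmod_sum_mult_squared_le)
  also have "\<dots> = (norm A * norm x)^2"
    by (simp add: norm_matrix_squared norm_vec_squared power_mult_distrib sum_distrib_right)
  finally show ?thesis
    by (rule power2_le_imp_le) simp
qed

lemma one_le_norm_mat_1: "1 \<le> norm (mat 1 :: complex^'n^'n)"
proof -
  fix i :: 'n
  have "norm ((mat 1 :: complex^'n^'n) $ i $ i) \<le> norm (mat 1 :: complex^'n^'n)"
    by (rule order_trans[OF Finite_Cartesian_Product.norm_nth_le Finite_Cartesian_Product.norm_nth_le])
  then show ?thesis by (simp add: mat_def)
qed

lemma invertible_mat_1_plus_if_norm_less_1:
  assumes "norm (X::complex^'n^'n) < 1"
  shows "invertible (mat 1 + X)"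
proof -
  have "x = 0" if "(mat 1 + X) *v x = 0" for x
  proof -
    have "norm x = norm (X *v x)"
      using that by (metis add_eq_0_iff2 matrix_vector_mult_add_rdistrib matrix_vector_mul_lid norm_minus_cancel)
    also have "\<dots> \<le> norm X * norm x" by (rule norm_matrix_vector_mult_le)
    finally have "(1 - norm X) * norm x \<le> 0" by (simp add: algebra_simps)
    with assms show "x = 0" by (simp add: mult_le_0_iff)
  qed
  then show ?thesis
    by (simp add: invertible_left_inverse matrix_left_invertible_ker)
qed

lemma bounded_bilinear_matrix_mult:
  "bounded_bilinear (\<lambda>(A::complex^'k^'m) (B::complex^'n^'k). A ** B)"
proof
  show "(A + A') ** B = A ** B + A' ** B" for A A' :: "complex^'k^'m" and B :: "complex^'n^'k"
    by (vector matrix_matrix_mult_def sum.distrib[symmetric] field_simps)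
  show "\<exists>K. \<forall>A B. norm (A ** B) \<le> norm (A::complex^'k^'m) * norm (B::complex^'n^'k) * K"
    using norm_matrix_mult_le by (metis mult.right_neutral)
qed (simp_all add: matrix_add_ldistrib scalar_matrix_assoc matrix_scalar_ac)

lemma matrix_mult_uminus_left: "(- (A::complex^'k^'m)) ** B = - (A ** B)"
  by (vector matrix_matrix_mult_def sum_negf[symmetric])

lemma matrix_mult_uminus_right: "(A::complex^'k^'m) ** (- B) = - (A ** B)"
  by (vector matrix_matrix_mult_def sum_negf[symmetric])

section \<open>The Hermitian part of a matrix\<close>

lemma inner_matrix_entries:
  "inner (X::complex^'n^'m) Y = (\<Sum>i\<in>UNIV. \<Sum>j\<in>UNIV. Re (cnj (X$i$j) * Y$i$j))"
  by (simp add: inner_vec_def inner_complex_def)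

lemma sum_swap_outer_inner:
  "(\<Sum>i\<in>A. \<Sum>j\<in>B. \<Sum>k\<in>C. f i j k) = (\<Sum>k\<in>C. \<Sum>j\<in>B. \<Sum>i\<in>A. f i j k)"
proof -
  have "(\<Sum>i\<in>A. \<Sum>j\<in>B. \<Sum>k\<in>C. f i j k) = (\<Sum>i\<in>A. \<Sum>k\<in>C. \<Sum>j\<in>B. f i j k)"
    by (rule sum.cong[OF refl], rule sum.swap)
  also have "\<dots> = (\<Sum>k\<in>C. \<Sum>i\<in>A. \<Sum>j\<in>B. f i j k)" by (rule sum.swap)
  also have "\<dots> = (\<Sum>k\<in>C. \<Sum>j\<in>B. \<Sum>i\<in>A. f i j k)"
    by (rule sum.cong[OF refl], rule sum.swap)
  finally show ?thesis .
qed

lemma inner_adjoint_mat_mult: "inner (X::complex^'k^'n) (adjoint_mat M ** X) = inner X (M ** X)"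
proof -
  have "inner X (adjoint_mat M ** X) = (\<Sum>i\<in>UNIV. \<Sum>j\<in>UNIV. \<Sum>k\<in>UNIV. Re (cnj (X$i$j) * (cnj (M$k$i) * X$k$j)))"
    by (simp add: inner_matrix_entries adjoint_mat_def matrix_matrix_mult_def sum_distrib_left)
  also have "\<dots> = (\<Sum>k\<in>UNIV. \<Sum>j\<in>UNIV. \<Sum>i\<in>UNIV. Re (cnj (X$i$j) * (cnj (M$k$i) * X$k$j)))"
    by (rule sum_swap_outer_inner)
  also have "\<dots> = (\<Sum>k\<in>UNIV. \<Sum>j\<in>UNIV. \<Sum>i\<in>UNIV. Re (cnj (X$k$j) * (M$k$i * X$i$j)))"
    by (intro sum.cong refl) (subst cnj.simps(1)[symmetric], simp add: mult.commute mult.left_commute)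
  also have "\<dots> = inner X (M ** X)"
    by (simp add: inner_matrix_entries matrix_matrix_mult_def sum_distrib_left)
  finally show ?thesis .
qed

lemma inner_Re_mat_mult: "inner (X::complex^'k^'n) (Re_mat M ** X) = inner X (M ** X)"
  by (simp add: Re_mat_def scalar_matrix_assoc[symmetric] bounded_bilinear.add_left[OF bounded_bilinear_matrix_mult]
      inner_add_right inner_adjoint_mat_mult)

lemma abs_inner_matrix_mult_le: "\<bar>inner (X::complex^'k^'n) (M ** X)\<bar> \<le> norm (Re_mat M) * (norm X)^2"
proof -
  have "\<bar>inner X (Re_mat M ** X)\<bar> \<le> norm X * norm (Re_mat M ** X)" by (rule Cauchy_Schwarz_ineq2)
  also have "\<dots> \<le> norm X * (norm (Re_mat M) * norm X)"
    by (intro mult_left_mono norm_matrix_mult_le) auto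
  finally show ?thesis by (simp add: inner_Re_mat_mult power2_eq_square mult_ac)
qed

section \<open>Linear equations on the half-line\<close>

lemma at_within_atMost_0_eq_Icc:
  fixes a x :: real
  assumes "a < x" "x \<le> 0"
  shows "at x within {..0} = at x within {a..0}"
  by (rule at_within_nhd[of x "{a<..}"]) (use assms in auto)

lemma continuous_on_atMost_0_if_Icc:
  fixes f :: "real \<Rightarrow> 'a::topological_space"
  assumes "\<And>n::nat. continuous_on {-real n..0} f"
  shows "continuous_on {..0} f"
  unfolding continuous_on_eq_continuous_within
proof
  fix x :: real assume x: "x \<in> {..0}"
  obtain n :: nat where n: "-x < real n" using reals_Archimedean2 by blast
  have "continuous (at x within {-real n..0}) f"
    using assms[of n] x n by (simp add: continuous_on_eq_continuous_within)
  with x n show "continuous (at x within {..0}) f"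
    using at_within_atMost_0_eq_Icc[of "-real n" x] by simp
qed

lemma has_vector_derivative_integral_to_0:
  fixes h :: "real \<Rightarrow> 'a::banach"
  assumes h: "continuous_on {..0} h" and x: "x \<le> 0"
  shows "((\<lambda>y. integral {y..0} h) has_vector_derivative - h x) (at x within {..0})"
proof -
  obtain n :: nat where n: "-x < real n" using reals_Archimedean2 by blast
  have hn: "continuous_on {-real n..0} h" by (rule continuous_on_subset[OF h]) auto
  have split: "integral {y..0} h = integral {-real n..0} h - integral {-real n..y} h"
    if "y \<in> {-real n..0}" for y
  proof -
    have "integral {-real n..y} h + integral {y..0} h = integral {-real n..0} h"
      using that by (intro Henstock_Kurzweil_Integration.integral_combine integrable_continuous_real hn) auto
    then show ?thesis by (simp add: algebra_simps)
  qed
  have xn: "x \<in> {-real n..0}" using x n by auto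
  have "((\<lambda>y. integral {-real n..0} h - integral {-real n..y} h) has_vector_derivative - h x)
      (at x within {-real n..0})"
    using has_vector_derivative_diff[OF has_vector_derivative_const integral_has_vector_derivative[OF hn xn]]
    by simp
  then have "((\<lambda>y. integral {y..0} h) has_vector_derivative - h x) (at x within {-real n..0})"
    by (rule has_vector_derivative_transform[OF xn split, rotated])
  with n x show ?thesis using at_within_atMost_0_eq_Icc[of "-real n" x] by simp
qed

lemma integral_exp_mult:
  fixes a b c :: real
  assumes "a \<le> b" "c \<noteq> 0"
  shows "integral {a..b} (\<lambda>t. exp (c * t)) = (exp (c * b) - exp (c * a)) / c"
proof -
  have "((\<lambda>t. exp (c * t)) has_integral (exp (c * b) / c - exp (c * a) / c)) {a..b}"
    using assms
    by (intro fundamental_theorem_of_calculus)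
       (auto intro!: derivative_eq_intros simp: has_real_derivative_iff_has_vector_derivative[symmetric])
  then show ?thesis by (simp add: integral_unique diff_divide_distrib)
qed

context
  fixes prod :: "'b::real_normed_vector \<Rightarrow> 'a::banach \<Rightarrow> 'a" and F :: "real \<Rightarrow> 'b" and X0 :: 'a
  assumes bilinear: "bounded_bilinear prod" and F_cont: "continuous_on {..0} F"
begin

primrec picard_iterate :: "nat \<Rightarrow> real \<Rightarrow> 'a" where
  "picard_iterate 0 = (\<lambda>_. X0)"
| "picard_iterate (Suc k) = (\<lambda>x. X0 - integral {x..0} (\<lambda>t. prod (F t) (picard_iterate k t)))"

definition picard_limit :: "real \<Rightarrow> 'a" where
  "picard_limit x = X0 + (\<Sum>k. picard_iterate (Suc k) x - picard_iterate k x)"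

lemma continuous_on_prod_F:
  "continuous_on {..0} Z \<Longrightarrow> continuous_on {..0} (\<lambda>t. prod (F t) (Z t))"
  by (rule bounded_bilinear.continuous_on[OF bilinear F_cont])

lemma integrable_prod_F:
  "continuous_on {..0} Z \<Longrightarrow> (\<lambda>t. prod (F t) (Z t)) integrable_on {x..0}"
  by (intro integrable_continuous_real continuous_on_subset[OF continuous_on_prod_F]) auto

lemma continuous_on_integral_prod_F:
  assumes "continuous_on {..0} Z"
  shows "continuous_on {..0} (\<lambda>x. integral {x..0} (\<lambda>t. prod (F t) (Z t)))"
  using has_vector_derivative_integral_to_0[OF continuous_on_prod_F[OF assms]]
  by (auto simp: continuous_on_eq_continuous_within intro: has_vector_derivative_continuous)

lemma continuous_on_picard_iterate: "continuous_on {..0} (picard_iterate k)"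
  by (induction k) (auto intro!: continuous_intros continuous_on_integral_prod_F)

lemma picard_iterate_Suc_diff:
  "picard_iterate (Suc (Suc k)) x - picard_iterate (Suc k) x
     = - integral {x..0} (\<lambda>t. prod (F t) (picard_iterate (Suc k) t - picard_iterate k t))"
proof -
  have Suc_eq: "picard_iterate (Suc j) x = X0 - integral {x..0} (\<lambda>t. prod (F t) (picard_iterate j t))" for j
    by simp
  have "integral {x..0} (\<lambda>t. prod (F t) (picard_iterate (Suc k) t - picard_iterate k t))
      = integral {x..0} (\<lambda>t. prod (F t) (picard_iterate (Suc k) t)) - integral {x..0} (\<lambda>t. prod (F t) (picard_iterate k t))"
    unfolding bounded_bilinear.diff_right[OF bilinear]
    by (intro integral_diff integrable_prod_F continuous_on_picard_iterate)
  then show ?thesis unfolding Suc_eq[of "Suc k"] Suc_eq[of k] by simp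
qed

lemma prod_F_bounded_on_Icc:
  obtains L where "L > 0" "\<And>t v. t \<in> {a..0} \<Longrightarrow> norm (prod (F t) v) \<le> L * norm v"
proof -
  obtain K where K: "K > 0" "\<And>u v. norm (prod u v) \<le> norm u * norm v * K"
    using bounded_bilinear.pos_bounded[OF bilinear] by blast
  have "compact (F ` {a..0})"
    by (intro compact_continuous_image continuous_on_subset[OF F_cont]) auto
  then obtain B where B: "B > 0" "\<And>t. t \<in> {a..0} \<Longrightarrow> norm (F t) \<le> B"
    by (auto dest!: compact_imp_bounded simp: bounded_pos)
  have "norm (prod (F t) v) \<le> (B * K) * norm v" if "t \<in> {a..0}" for t v
    using K(2)[of "F t" v] B(2)[OF that] K(1)
    by (smt (verit) mult.commute mult_right_mono norm_ge_zero mult.assoc)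
  with B K that show ?thesis by (meson mult_pos_pos)
qed

lemma norm_picard_iterate_diff_le:
  assumes L: "L > 0" "\<And>t v. t \<in> {a..0} \<Longrightarrow> norm (prod (F t) v) \<le> L * norm v"
    and x: "x \<in> {a..0}"
  shows "norm (picard_iterate (Suc k) x - picard_iterate k x) \<le> norm X0 * (1/2)^k * exp (-(2*L)*x)"
  using x
proof (induction k arbitrary: x)
  case 0
  have "norm (picard_iterate (Suc 0) x - picard_iterate 0 x) = norm (integral {x..0} (\<lambda>t. prod (F t) X0))"
    by simp
  also have "\<dots> \<le> integral {x..0} (\<lambda>t. L * norm X0)"
    using 0 L integrable_prod_F[of "\<lambda>_. X0"] by (intro integral_norm_bound_integral) auto
  also have "\<dots> = L * norm X0 * (- x)" using 0 by simp
  also have "\<dots> \<le> norm X0 * (1 + (-(2*L)*x))"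
  proof -
    have "L * x \<le> 0" using 0 L by (simp add: mult_nonneg_nonpos)
    then have "0 \<le> norm X0 * (1 - L * x)" by simp
    then show ?thesis by (simp add: algebra_simps)
  qed
  also have "\<dots> \<le> norm X0 * exp (-(2*L)*x)"
    by (intro mult_left_mono exp_ge_add_one_self) auto
  finally show ?case by simp
next
  case (Suc k)
  let ?c = "L * (norm X0 * (1/2)^k)"
  have "norm (picard_iterate (Suc (Suc k)) x - picard_iterate (Suc k) x)
      \<le> integral {x..0} (\<lambda>t. ?c * exp (-(2*L)*t))"
    unfolding picard_iterate_Suc_diff norm_minus_cancel
  proof (rule integral_norm_bound_integral)
    show "(\<lambda>t. prod (F t) (picard_iterate (Suc k) t - picard_iterate k t)) integrable_on {x..0}"
      by (intro integrable_prod_F continuous_on_diff continuous_on_picard_iterate)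
    show "(\<lambda>t. ?c * exp (-(2*L)*t)) integrable_on {x..0}"
      by (intro integrable_continuous_real continuous_intros)
    fix t assume t: "t \<in> {x..0}"
    then have "t \<in> {a..0}" using Suc.prems by auto
    then show "norm (prod (F t) (picard_iterate (Suc k) t - picard_iterate k t)) \<le> ?c * exp (-(2*L)*t)"
      using L Suc.IH[of t] by (smt (verit) mult.assoc mult_left_mono)
  qed
  also have "\<dots> = ?c * ((exp (-(2*L)*0) - exp (-(2*L)*x)) / (-(2*L)))"
    using Suc.prems L by (subst integral_mult_right, subst integral_exp_mult) auto
  also have "\<dots> = norm X0 * (1/2)^(Suc k) * (exp (-(2*L)*x) - 1)"
    using L(1) by (simp add: field_simps)
  also have "\<dots> \<le> norm X0 * (1/2)^(Suc k) * exp (-(2*L)*x)"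
    by (intro mult_left_mono) auto
  finally show ?case .
qed

lemma picard_iterate_eq_sum: "picard_iterate k x = X0 + (\<Sum>i<k. picard_iterate (Suc i) x - picard_iterate i x)"
  by (induction k) (simp_all del: picard_iterate.simps(2))

lemma uniform_limit_picard_iterate: "uniform_limit {a..0} picard_iterate picard_limit sequentially"
proof -
  obtain L where L: "L > 0" "\<And>t v. t \<in> {a..0} \<Longrightarrow> norm (prod (F t) v) \<le> L * norm v"
    using prod_F_bounded_on_Icc by blast
  have "uniform_limit {a..0} (\<lambda>k x. \<Sum>i<k. picard_iterate (Suc i) x - picard_iterate i x)
      (\<lambda>x. \<Sum>i. picard_iterate (Suc i) x - picard_iterate i x) sequentially"
  proof (rule Weierstrass_m_test)
    fix k x assume x: "x \<in> {a..0}"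
    have "norm X0 * (1/2)^k * exp (-(2*L)*x) \<le> norm X0 * (1/2)^k * exp (-(2*L)*a)"
      using x L by (intro mult_left_mono) auto
    with norm_picard_iterate_diff_le[OF L x, of k]
    show "norm (picard_iterate (Suc k) x - picard_iterate k x) \<le> norm X0 * (1/2)^k * exp (-(2*L)*a)"
      by linarith
  qed (intro summable_mult2 summable_mult summable_geometric, simp)
  moreover have "dist (picard_iterate k x) (picard_limit x)
      = dist (\<Sum>i<k. picard_iterate (Suc i) x - picard_iterate i x) (\<Sum>i. picard_iterate (Suc i) x - picard_iterate i x)"
    for k x
    unfolding picard_limit_def by (subst picard_iterate_eq_sum) (rule dist_add_cancel)
  ultimately show ?thesis
    unfolding uniform_limit_iff by simp
qed

lemma continuous_on_picard_limit: "continuous_on {..0} picard_limit"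
proof (rule continuous_on_atMost_0_if_Icc)
  fix n :: nat
  show "continuous_on {-real n..0} picard_limit"
    by (rule uniform_limit_theorem[OF _ uniform_limit_picard_iterate])
       (auto intro!: always_eventually continuous_on_subset[OF continuous_on_picard_iterate])
qed

lemma picard_limit_integral_equation:
  assumes "x \<le> 0"
  shows "picard_limit x = X0 - integral {x..0} (\<lambda>t. prod (F t) (picard_limit t))"
proof -
  have bounded: "bounded (Z ` {x..0})" if "continuous_on {..0} Z" for Z :: "real \<Rightarrow> 'c::metric_space"
    by (intro compact_imp_bounded compact_continuous_image continuous_on_subset[OF that]) auto
  have "uniform_limit {x..0} (\<lambda>k t. prod (F t) (picard_iterate k t)) (\<lambda>t. prod (F t) (picard_limit t)) sequentially"
    by (intro bounded_bilinear.bounded_uniform_limit[OF bilinear] uniform_limit_const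
        uniform_limit_picard_iterate bounded F_cont continuous_on_picard_limit)
  then obtain I J where IJ: "\<And>k. ((\<lambda>t. prod (F t) (picard_iterate k t)) has_integral I k) {x..0}"
    "((\<lambda>t. prod (F t) (picard_limit t)) has_integral J) {x..0}" "I \<longlonglongrightarrow> J"
    by (rule uniform_limit_integral) (auto intro!: continuous_on_subset[OF continuous_on_prod_F] continuous_on_picard_iterate)
  have "(\<lambda>k. picard_iterate (Suc k) x) \<longlonglongrightarrow> picard_limit x"
    using LIMSEQ_Suc[OF tendsto_uniform_limitI[OF uniform_limit_picard_iterate, of x x]] assms by simp
  moreover have "(\<lambda>k. picard_iterate (Suc k) x) = (\<lambda>k. X0 - I k)"
    by (simp add: integral_unique[OF IJ(1)])
  ultimately have "picard_limit x = X0 - J"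
    using LIMSEQ_unique tendsto_diff[OF tendsto_const IJ(3)] by metis
  with IJ(2) show ?thesis by (simp add: integral_unique)
qed

theorem linear_ode_solution_exists:
  "\<exists>X. X 0 = X0 \<and> continuous_on {..0} X \<and>
     (\<forall>x\<le>0. (X has_vector_derivative prod (F x) (X x)) (at x within {..0}))"
proof (intro exI conjI allI impI)
  show "picard_limit 0 = X0" using picard_limit_integral_equation[of 0] by simp
  show "continuous_on {..0} picard_limit" by (rule continuous_on_picard_limit)
  fix x :: real assume x: "x \<le> 0"
  have "((\<lambda>y. X0 - integral {y..0} (\<lambda>t. prod (F t) (picard_limit t))) has_vector_derivative
      prod (F x) (picard_limit x)) (at x within {..0})"
    using has_vector_derivative_diff[OF has_vector_derivative_const
        has_vector_derivative_integral_to_0[OF continuous_on_prod_F[OF continuous_on_picard_limit] x]]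
    by simp
  then show "(picard_limit has_vector_derivative prod (F x) (picard_limit x)) (at x within {..0})"
    by (rule has_vector_derivative_transform[rotated 2]) (use x picard_limit_integral_equation in auto)
qed

end

section \<open>Growth estimates\<close>

lemma has_real_derivative_nonpos_imp_le:
  fixes f :: "real \<Rightarrow> real"
  assumes "a \<le> b"
    and "\<And>t. t \<in> {a..b} \<Longrightarrow> (f has_real_derivative f' t) (at t within {a..b})"
    and "\<And>t. t \<in> {a..b} \<Longrightarrow> f' t \<le> 0"
  shows "f b \<le> f a"
proof -
  obtain t where t: "t \<in> {a..b}" "f b - f a = (b - a) * f' t"
    using mvt_very_simple[OF assms(1), of f "\<lambda>t. (*) (f' t)"] assms(2)
    by (auto simp: has_field_derivative_def)
  have "(b - a) * f' t \<le> 0" using assms(1) assms(3)[OF t(1)] by (simp add: mult_nonneg_nonpos)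
  with t(2) show ?thesis by simp
qed

lemma norm_diff_le_real_derivative_bound:
  fixes h :: "real \<Rightarrow> 'a::real_inner"
  assumes ab: "a \<le> b"
    and h: "\<And>t. t \<in> {a..b} \<Longrightarrow> (h has_vector_derivative h' t) (at t within {a..b})"
    and g: "\<And>t. t \<in> {a..b} \<Longrightarrow> (g has_real_derivative g' t) (at t within {a..b})"
    and bound: "\<And>t. t \<in> {a..b} \<Longrightarrow> norm (h' t) \<le> g' t"
  shows "norm (h b - h a) \<le> g b - g a"
proof -
  define v where "v = h b - h a"
  have "inner v (h b) - norm v * g b \<le> inner v (h a) - norm v * g a"
  proof (rule has_real_derivative_nonpos_imp_le[OF ab])
    fix t assume t: "t \<in> {a..b}"
    show "((\<lambda>t. inner v (h t) - norm v * g t) has_real_derivative inner v (h' t) - norm v * g' t)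
        (at t within {a..b})"
    proof (rule DERIV_diff)
      show "((\<lambda>t. inner v (h t)) has_real_derivative inner v (h' t)) (at t within {a..b})"
        using bounded_linear.has_vector_derivative[OF bounded_linear_inner_right h[OF t]]
        by (simp add: has_real_derivative_iff_has_vector_derivative)
    qed (rule DERIV_cmult[OF g[OF t]])
    have "inner v (h' t) \<le> norm v * norm (h' t)" by (rule norm_cauchy_schwarz)
    also have "\<dots> \<le> norm v * g' t" using bound[OF t] by (simp add: mult_left_mono)
    finally show "inner v (h' t) - norm v * g' t \<le> 0" by simp
  qed
  then have "inner v (h b - h a) \<le> norm v * (g b - g a)"
    by (simp add: inner_diff_right algebra_simps)
  then have "norm v * norm v \<le> norm v * (g b - g a)"
    by (simp only: v_def[symmetric]) (simp add: dot_square_norm power2_eq_square)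
  moreover have "- g b \<le> - g a"
  proof (rule has_real_derivative_nonpos_imp_le[OF ab])
    fix t assume t: "t \<in> {a..b}"
    show "((\<lambda>t. - g t) has_real_derivative - g' t) (at t within {a..b})" by (rule DERIV_minus[OF g[OF t]])
    show "- g' t \<le> 0" using bound[OF t] norm_ge_zero[of "h' t"] by linarith
  qed
  ultimately have "norm v \<le> g b - g a"
    by (cases "norm v = 0") (simp_all add: mult_le_cancel_left_pos)
  then show ?thesis by (simp add: v_def)
qed

text \<open>The sign \<open>s = \<plusminus>1\<close> chooses between the forward and the backward estimate.\<close>

lemma norm_squared_exp_monotone:
  fixes X D :: "real \<Rightarrow> 'a::real_inner" and r R :: "real \<Rightarrow> real"
  assumes ab: "a \<le> b" and s: "s \<in> {-1, 1}"
    and X: "\<And>t. t \<in> {a..b} \<Longrightarrow> (X has_vector_derivative D t) (at t within {a..b})"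
    and R: "\<And>t. t \<in> {a..b} \<Longrightarrow> (R has_real_derivative r t) (at t within {a..b})"
    and bound: "\<And>t. t \<in> {a..b} \<Longrightarrow> \<bar>inner (X t) (D t)\<bar> \<le> r t * (norm (X t))^2"
  shows "s * ((norm (X b))^2 * exp (-2 * s * R b)) \<le> s * ((norm (X a))^2 * exp (-2 * s * R a))"
proof (rule has_real_derivative_nonpos_imp_le[OF ab])
  fix t assume t: "t \<in> {a..b}"
  have "((\<lambda>t. inner (X t) (X t)) has_real_derivative 2 * inner (X t) (D t)) (at t within {a..b})"
    using bounded_bilinear.has_vector_derivative[OF bounded_bilinear_inner X[OF t] X[OF t]]
    by (simp add: has_real_derivative_iff_has_vector_derivative inner_commute[of "D t"])
  then show "((\<lambda>t. s * ((norm (X t))^2 * exp (-2 * s * R t))) has_real_derivative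
      s * (2 * inner (X t) (D t) * exp (-2 * s * R t) + inner (X t) (X t) * (exp (-2 * s * R t) * (-2 * s * r t))))
      (at t within {a..b})"
    unfolding power2_norm_eq_inner by (auto intro!: derivative_eq_intros R[OF t])
  have "s * inner (X t) (D t) \<le> r t * inner (X t) (X t)"
    using bound[OF t] s by (auto simp: power2_norm_eq_inner)
  moreover have "s * s = 1" using s by auto
  ultimately have "2 * (s * inner (X t) (D t) - (s * s) * (r t * inner (X t) (X t))) * exp (-2 * s * R t) \<le> 0"
    by (simp add: mult_nonpos_nonneg)
  then show "s * (2 * inner (X t) (D t) * exp (-2 * s * R t) + inner (X t) (X t) * (exp (-2 * s * R t) * (-2 * s * r t))) \<le> 0"
    by (simp add: algebra_simps)
qed

lemma norm_le_exp_growth: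
  fixes X D :: "real \<Rightarrow> 'a::real_inner" and r R :: "real \<Rightarrow> real"
  assumes ab: "a \<le> b"
    and X: "\<And>t. t \<in> {a..b} \<Longrightarrow> (X has_vector_derivative D t) (at t within {a..b})"
    and R: "\<And>t. t \<in> {a..b} \<Longrightarrow> (R has_real_derivative r t) (at t within {a..b})"
    and bound: "\<And>t. t \<in> {a..b} \<Longrightarrow> \<bar>inner (X t) (D t)\<bar> \<le> r t * (norm (X t))^2"
  shows "norm (X b) \<le> norm (X a) * exp (R b - R a)" and "norm (X a) \<le> norm (X b) * exp (R b - R a)"
proof -
  have square: "(u * exp d)^2 = u^2 * exp (2 * d)" for u d :: real
    by (simp add: power_mult_distrib exp_double)
  have "(norm (X b))^2 * exp (-2*R b) \<le> (norm (X a))^2 * exp (-2*R a)"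
    using norm_squared_exp_monotone[OF ab _ X R bound, of 1] by simp
  then have "(norm (X b))^2 * exp (-2*R b) * exp (2*R b) \<le> (norm (X a))^2 * exp (-2*R a) * exp (2*R b)"
    by (rule mult_right_mono) simp
  then have "(norm (X b))^2 \<le> (norm (X a) * exp (R b - R a))^2"
    by (simp add: square mult.assoc right_diff_distrib flip: exp_add)
  then show "norm (X b) \<le> norm (X a) * exp (R b - R a)"
    by (rule power2_le_imp_le) simp
  have "(norm (X a))^2 * exp (2*R a) \<le> (norm (X b))^2 * exp (2*R b)"
    using norm_squared_exp_monotone[OF ab _ X R bound, of "-1"] by simp
  then have "(norm (X a))^2 * exp (2*R a) * exp (-2*R a) \<le> (norm (X b))^2 * exp (2*R b) * exp (-2*R a)"
    by (rule mult_right_mono) simp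
  then have "(norm (X a))^2 \<le> (norm (X b) * exp (R b - R a))^2"
    by (simp add: square mult.assoc right_diff_distrib flip: exp_add)
  then show "norm (X a) \<le> norm (X b) * exp (R b - R a)"
    by (rule power2_le_imp_le) simp
qed

lemma norm_le_exp_of_inner_bound:
  fixes X D :: "real \<Rightarrow> 'a::real_inner"
  assumes X: "\<And>t. t \<le> 0 \<Longrightarrow> (X has_vector_derivative D t) (at t within {..0})"
    and bound: "\<And>t. t \<le> 0 \<Longrightarrow> \<bar>inner (X t) (D t)\<bar> \<le> (\<alpha> + \<beta> * exp (\<gamma> * t)) * (norm (X t))^2"
    and pos: "\<alpha> \<ge> 0" "\<beta> \<ge> 0" "\<gamma> > 0" and xy: "x \<le> 0" "y \<le> 0"
  shows "norm (X x) \<le> norm (X y) * exp (\<alpha> * \<bar>x - y\<bar> + \<beta> / \<gamma>)"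
proof -
  define R where "R t = \<alpha> * t + \<beta> / \<gamma> * exp (\<gamma> * t)" for t
  have R: "(R has_real_derivative \<alpha> + \<beta> * exp (\<gamma> * t)) (at t within S)" for t S
    unfolding R_def using pos(3) by (auto intro!: derivative_eq_intros)
  have growth: "exp (R b - R a) \<le> exp (\<alpha> * \<bar>x - y\<bar> + \<beta> / \<gamma>)"
    if "a \<le> b" "b \<le> 0" "b - a = \<bar>x - y\<bar>" for a b
  proof -
    have "exp (\<gamma> * b) \<le> 1" using pos(3) that(2) by (simp add: mult_nonneg_nonpos)
    then have "\<beta> / \<gamma> * exp (\<gamma> * b) \<le> \<beta> / \<gamma>" using pos by (intro mult_left_le) auto
    moreover have "\<beta> / \<gamma> * exp (\<gamma> * a) \<ge> 0" using pos by simp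
    moreover have "\<alpha> * b - \<alpha> * a = \<alpha> * \<bar>x - y\<bar>" using that by (simp add: right_diff_distrib[symmetric])
    ultimately show ?thesis by (simp add: R_def)
  qed
  have estimates: "norm (X b) \<le> norm (X a) * exp (R b - R a) \<and> norm (X a) \<le> norm (X b) * exp (R b - R a)"
    if ab: "a \<le> b" "b \<le> 0" for a b
  proof -
    have X': "(X has_vector_derivative D t) (at t within {a..b})" if "t \<in> {a..b}" for t
      using that ab by (intro has_vector_derivative_within_subset[OF X]) auto
    have bound': "\<bar>inner (X t) (D t)\<bar> \<le> (\<alpha> + \<beta> * exp (\<gamma> * t)) * (norm (X t))^2" if "t \<in> {a..b}" for t
      using that ab bound by auto
    show ?thesis using norm_le_exp_growth[OF ab(1) X' R bound'] by blast
  qed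
  show ?thesis
  proof (cases "y \<le> x")
    case True
    then have "exp (R x - R y) \<le> exp (\<alpha> * \<bar>x - y\<bar> + \<beta> / \<gamma>)" using growth[of y x] xy by simp
    with True xy estimates[of y x] show ?thesis by (meson mult_left_mono norm_ge_zero order_trans)
  next
    case False
    then have "exp (R y - R x) \<le> exp (\<alpha> * \<bar>x - y\<bar> + \<beta> / \<gamma>)" using growth[of x y] xy by simp
    with False xy estimates[of x y] show ?thesis by (meson mult_left_mono norm_ge_zero order_trans nle_le)
  qed
qed

lemma convergent_at_minus_infinity_if_derivative_decays:
  fixes V D :: "real \<Rightarrow> 'a::{real_inner,banach}"
  assumes V: "\<And>t. t \<le> 0 \<Longrightarrow> (V has_vector_derivative D t) (at t within {..0})"
    and D: "\<And>t. t \<le> 0 \<Longrightarrow> norm (D t) \<le> c * \<gamma> * exp (\<gamma> * t)"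
    and pos: "c \<ge> 0" "\<gamma> > 0"
  obtains L where "(\<lambda>n. V (- real n)) \<longlonglongrightarrow> L" "\<And>x. x \<le> 0 \<Longrightarrow> norm (V x - L) \<le> c * exp (\<gamma> * x)"
proof -
  have increment: "norm (V b - V a) \<le> c * exp (\<gamma> * b)" if "a \<le> b" "b \<le> 0" for a b
  proof -
    have "norm (V b - V a) \<le> c * exp (\<gamma> * b) - c * exp (\<gamma> * a)"
      by (rule norm_diff_le_real_derivative_bound[OF that(1), of V D _ "\<lambda>t. c * \<gamma> * exp (\<gamma> * t)"])
         (use that in \<open>auto intro!: derivative_eq_intros has_vector_derivative_within_subset[OF V] D\<close>)
    also have "\<dots> \<le> c * exp (\<gamma> * b)" using pos by simp
    finally show ?thesis .
  qed
  define step where "step k = V (- real k) - V (- real (Suc k))" for k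
  have "summable (\<lambda>k. c * exp (- \<gamma>) ^ k)" using pos by (intro summable_mult summable_geometric) simp
  then have "summable step"
  proof (rule summable_comparison_test'[where N=0])
    fix k
    show "norm (step k) \<le> c * exp (- \<gamma>) ^ k"
      using increment[of "- real (Suc k)" "- real k"] by (simp add: step_def exp_of_nat_mult[symmetric] mult_ac)
  qed
  moreover have "V (- real n) = V 0 - (\<Sum>k<n. step k)" for n
    by (induction n) (simp_all add: step_def)
  ultimately have lim: "(\<lambda>n. V (- real n)) \<longlonglongrightarrow> V 0 - suminf step"
    by (simp add: tendsto_diff summable_LIMSEQ)
  moreover have "norm (V x - (V 0 - suminf step)) \<le> c * exp (\<gamma> * x)" if "x \<le> 0" for x
  proof (rule LIMSEQ_le_const2)
    show "(\<lambda>n. norm (V x - V (- real n))) \<longlonglongrightarrow> norm (V x - (V 0 - suminf step))"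
      by (intro tendsto_intros lim)
    obtain n0 :: nat where "- x \<le> real n0" using real_arch_simple by blast
    with that show "\<exists>n0. \<forall>n\<ge>n0. norm (V x - V (- real n)) \<le> c * exp (\<gamma> * x)"
      by (intro exI[of _ n0] allI impI increment) auto
  qed
  ultimately show ?thesis by (rule that)
qed

section \<open>Conjugating the perturbed system\<close>

lemma norm_matrix_mult3_le:
  "norm ((A::complex^'k^'m) ** (B::complex^'l^'k) ** (C::complex^'n^'l)) \<le> norm A * norm B * norm C"
  by (meson norm_matrix_mult_le order_trans mult_right_mono norm_ge_zero)

lemma fundamental_matrices_exist:
  fixes M :: "real \<Rightarrow> complex^'n^'n"
  assumes M_cont: "continuous_on {..0} M"
  obtains \<Phi> Z where "\<Phi> 0 = mat 1" "Z 0 = mat 1" "continuous_on {..0} \<Phi>" "continuous_on {..0} Z"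
    "\<And>x. x \<le> 0 \<Longrightarrow> (\<Phi> has_vector_derivative M x ** \<Phi> x) (at x within {..0})"
    "\<And>x. x \<le> 0 \<Longrightarrow> (Z has_vector_derivative - (Z x ** M x)) (at x within {..0})"
    "\<And>x. x \<le> 0 \<Longrightarrow> \<Phi> x ** Z x = mat 1"
proof -
  obtain \<Phi> where \<Phi>: "\<Phi> 0 = mat 1" "continuous_on {..0} \<Phi>"
    "\<And>x. x \<le> 0 \<Longrightarrow> (\<Phi> has_vector_derivative M x ** \<Phi> x) (at x within {..0})"
    using linear_ode_solution_exists[OF bounded_bilinear_matrix_mult M_cont] by blast
  obtain Z where Z: "Z 0 = mat 1" "continuous_on {..0} Z"
    "\<And>x. x \<le> 0 \<Longrightarrow> (Z has_vector_derivative Z x ** - M x) (at x within {..0})"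
    using linear_ode_solution_exists[OF bounded_bilinear.flip[OF bounded_bilinear_matrix_mult]
        continuous_on_minus[OF M_cont]] by blast
  have "\<exists>c. \<forall>x\<in>{..0}. Z x ** \<Phi> x = c"
  proof (rule has_derivative_zero_constant)
    fix x :: real assume "x \<in> {..0}"
    then have "((\<lambda>x. Z x ** \<Phi> x) has_vector_derivative Z x ** (M x ** \<Phi> x) + (Z x ** - M x) ** \<Phi> x)
        (at x within {..0})"
      using bounded_bilinear.has_vector_derivative[OF bounded_bilinear_matrix_mult Z(3) \<Phi>(3)] by simp
    then show "((\<lambda>x. Z x ** \<Phi> x) has_derivative (\<lambda>h. 0)) (at x within {..0})"
      by (simp add: has_vector_derivative_def matrix_mult_uminus_left matrix_mult_uminus_right matrix_mul_assoc)
  qed simp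
  then have "Z x ** \<Phi> x = mat 1" if "x \<le> 0" for x
    using that Z(1) \<Phi>(1) by (metis atMost_iff matrix_mul_lid order_refl)
  then have "\<Phi> x ** Z x = mat 1" if "x \<le> 0" for x
    using that matrix_left_right_inverse by blast
  with \<Phi> Z that show ?thesis by (simp add: matrix_mult_uminus_right)
qed

lemma norm_fundamental_matrix_mult_inverse_le:
  fixes M \<Phi> Z :: "real \<Rightarrow> complex^'n^'n"
  assumes \<Phi>: "\<And>t. t \<le> 0 \<Longrightarrow> (\<Phi> has_vector_derivative M t ** \<Phi> t) (at t within {..0})"
    and inverse: "\<Phi> y ** Z y = mat 1"
    and Re_M: "\<And>t. t \<le> 0 \<Longrightarrow> norm (Re_mat (M t)) \<le> \<alpha> + \<beta> * exp (\<gamma> * t)"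
    and pos: "\<alpha> \<ge> 0" "\<beta> \<ge> 0" "\<gamma> > 0" and xy: "x \<le> 0" "y \<le> 0"
  shows "norm (\<Phi> x ** Z y) \<le> norm (mat 1 :: complex^'n^'n) * exp (\<alpha> * \<bar>x - y\<bar> + \<beta> / \<gamma>)"
proof -
  have "norm (\<Phi> x ** Z y) \<le> norm (\<Phi> y ** Z y) * exp (\<alpha> * \<bar>x - y\<bar> + \<beta> / \<gamma>)"
  proof (rule norm_le_exp_of_inner_bound[OF _ _ pos xy])
    fix t :: real assume t: "t \<le> 0"
    show "((\<lambda>t. \<Phi> t ** Z y) has_vector_derivative M t ** (\<Phi> t ** Z y)) (at t within {..0})"
      using bounded_bilinear.has_vector_derivative[OF bounded_bilinear_matrix_mult \<Phi>[OF t]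
          has_vector_derivative_const[of "Z y"]]
      by (simp add: matrix_mul_assoc)
    show "\<bar>inner (\<Phi> t ** Z y) (M t ** (\<Phi> t ** Z y))\<bar> \<le> (\<alpha> + \<beta> * exp (\<gamma> * t)) * (norm (\<Phi> t ** Z y))^2"
      using abs_inner_matrix_mult_le[of "\<Phi> t ** Z y" "M t"] Re_M[OF t]
      by (meson mult_right_mono order_trans zero_le_power2)
  qed
  with inverse show ?thesis by simp
qed

lemma norm_solution_le_exp_1:
  fixes B X :: "real \<Rightarrow> complex^'n^'n"
  assumes X: "\<And>t. t \<le> 0 \<Longrightarrow> (X has_vector_derivative B t ** X t) (at t within {..0})"
    and B: "\<And>t. t \<le> 0 \<Longrightarrow> norm (B t) \<le> b * exp (\<gamma> * t)"
    and \<gamma>: "\<gamma> > 0" and small: "b \<le> \<gamma>" and xy: "x \<le> 0" "y \<le> 0"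
  shows "norm (X x) \<le> norm (X y) * exp 1"
proof -
  have b: "b \<ge> 0" using B[of 0, simplified] norm_ge_zero[of "B 0"] by linarith
  have "norm (X x) \<le> norm (X y) * exp (0 * \<bar>x - y\<bar> + b / \<gamma>)"
  proof (rule norm_le_exp_of_inner_bound[OF X _ order_refl b \<gamma> xy])
    fix t :: real assume t: "t \<le> 0"
    have "\<bar>inner (X t) (B t ** X t)\<bar> \<le> norm (X t) * (norm (B t) * norm (X t))"
      by (rule order_trans[OF Cauchy_Schwarz_ineq2 mult_left_mono[OF norm_matrix_mult_le norm_ge_zero]])
    also have "\<dots> \<le> norm (X t) * (b * exp (\<gamma> * t) * norm (X t))"
      by (intro mult_left_mono mult_right_mono B[OF t]) auto
    finally show "\<bar>inner (X t) (B t ** X t)\<bar> \<le> (0 + b * exp (\<gamma> * t)) * (norm (X t))^2"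
      by (simp add: power2_eq_square mult_ac)
  qed
  also have "\<dots> \<le> norm (X y) * exp 1"
    using small \<gamma> by (intro mult_left_mono) auto
  finally show ?thesis .
qed

text \<open>The solution with \<open>V(0) = I\<close> converges at \<open>-\<infinity>\<close> to a limit \<open>L\<close> close to \<open>I\<close>;
  then \<open>U = V L\<^sup>-\<^sup>1\<close>.\<close>

lemma solution_tending_to_identity_exists:
  fixes B :: "real \<Rightarrow> complex^'n^'n"
  assumes B_cont: "continuous_on {..0} B" and B: "\<And>t. t \<le> 0 \<Longrightarrow> norm (B t) \<le> b * exp (\<gamma> * t)"
    and \<gamma>: "\<gamma> > 0" and small: "2 * b * norm (mat 1 :: complex^'n^'n) * exp 1 \<le> \<gamma>"
  obtains U where "\<And>x. x \<le> 0 \<Longrightarrow> (U has_vector_derivative B x ** U x) (at x within {..0})"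
    "(\<lambda>n. U (- real n)) \<longlonglongrightarrow> mat 1" "\<And>x. x \<le> 0 \<Longrightarrow> norm (U x) \<le> norm (mat 1 :: complex^'n^'n) * exp 1"
proof -
  define N where "N = norm (mat 1 :: complex^'n^'n)"
  have b: "b \<ge> 0" using B[of 0, simplified] norm_ge_zero[of "B 0"] by linarith
  have "b * (1 * 1) \<le> b * (2 * N * exp 1)"
    unfolding N_def using b one_le_norm_mat_1[where 'n='n] by (intro mult_left_mono mult_mono) auto
  with small have b_small: "b \<le> \<gamma>" by (simp add: N_def mult_ac)
  obtain V where V: "V 0 = mat 1"
    "\<And>x. x \<le> 0 \<Longrightarrow> (V has_vector_derivative B x ** V x) (at x within {..0})"
    using linear_ode_solution_exists[OF bounded_bilinear_matrix_mult B_cont] by blast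
  have "norm (B t ** V t) \<le> (b * N * exp 1 / \<gamma>) * \<gamma> * exp (\<gamma> * t)" if "t \<le> 0" for t
  proof -
    have "norm (V t) \<le> N * exp 1"
      using norm_solution_le_exp_1[OF V(2) B \<gamma> b_small that order_refl] by (simp add: V(1) N_def)
    then have "norm (B t ** V t) \<le> b * exp (\<gamma> * t) * (N * exp 1)"
      using B[OF that] b by (meson norm_matrix_mult_le mult_mono norm_ge_zero order_trans)
    with \<gamma> show ?thesis by (simp add: field_simps)
  qed
  then obtain L where L: "(\<lambda>n. V (- real n)) \<longlonglongrightarrow> L"
    "\<And>x. x \<le> 0 \<Longrightarrow> norm (V x - L) \<le> (b * N * exp 1 / \<gamma>) * exp (\<gamma> * x)"
    using convergent_at_minus_infinity_if_derivative_decays[OF V(2), of "b * N * exp 1 / \<gamma>" \<gamma>] b \<gamma>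
    by (auto simp: N_def)
  have "norm (L - mat 1) \<le> b * N * exp 1 / \<gamma>"
    using L(2)[of 0] by (simp add: V(1) norm_minus_commute)
  also have "\<dots> \<le> 1/2"
    using small \<gamma> by (simp add: N_def field_simps)
  finally have "norm (L - mat 1) \<le> 1/2" .
  then have "invertible (mat 1 + (L - mat 1))"
    by (intro invertible_mat_1_plus_if_norm_less_1) simp
  then obtain L' where L': "L ** L' = mat 1" by (auto simp: invertible_def)
  show ?thesis
  proof (rule that[of "\<lambda>x. V x ** L'"])
    show U: "((\<lambda>x. V x ** L') has_vector_derivative B x ** (V x ** L')) (at x within {..0})" if "x \<le> 0" for x
      using bounded_bilinear.has_vector_derivative[OF bounded_bilinear_matrix_mult V(2)[OF that]
          has_vector_derivative_const[of L']]
      by (simp add: matrix_mul_assoc)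
    have U_bound: "norm (V x ** L') \<le> norm (V (- real n) ** L') * exp 1" if "x \<le> 0" for x n
      using norm_solution_le_exp_1[of "\<lambda>x. V x ** L'", OF U B \<gamma> b_small that] by simp
    show lim: "(\<lambda>n. V (- real n) ** L') \<longlonglongrightarrow> mat 1"
      using bounded_bilinear.tendsto[OF bounded_bilinear_matrix_mult L(1) tendsto_const[of L']] by (simp add: L')
    show "norm (V x ** L') \<le> norm (mat 1 :: complex^'n^'n) * exp 1" if "x \<le> 0" for x
      by (rule LIMSEQ_le_const[OF tendsto_mult_right[OF tendsto_norm[OF lim]]]) (use U_bound[OF that] in auto)
  qed
qed

lemma has_vector_derivative_conjugation:
  fixes M \<Theta> \<Phi> Z U :: "real \<Rightarrow> complex^'n^'n"
  assumes \<Phi>: "(\<Phi> has_vector_derivative M x ** \<Phi> x) (at x within S)"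
    and Z: "(Z has_vector_derivative - (Z x ** M x)) (at x within S)"
    and U: "(U has_vector_derivative (Z x ** \<Theta> x ** \<Phi> x) ** U x) (at x within S)"
    and inverse: "\<Phi> x ** Z x = mat 1"
  shows "((\<lambda>t. \<Phi> t ** U t ** Z t) has_vector_derivative
      (M x + \<Theta> x) ** (\<Phi> x ** U x ** Z x) - (\<Phi> x ** U x ** Z x) ** M x) (at x within S)"
proof -
  have "((\<lambda>t. \<Phi> t ** U t ** Z t) has_vector_derivative
      (\<Phi> x ** U x) ** - (Z x ** M x) + (\<Phi> x ** ((Z x ** \<Theta> x ** \<Phi> x) ** U x) + (M x ** \<Phi> x) ** U x) ** Z x)
      (at x within S)"
    using bounded_bilinear.has_vector_derivative[OF bounded_bilinear_matrix_mult
        bounded_bilinear.has_vector_derivative[OF bounded_bilinear_matrix_mult \<Phi> U] Z]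
    by simp
  moreover have "(\<Phi> x ** U x) ** - (Z x ** M x) + (\<Phi> x ** ((Z x ** \<Theta> x ** \<Phi> x) ** U x) + (M x ** \<Phi> x) ** U x) ** Z x
      = (M x + \<Theta> x) ** (\<Phi> x ** U x ** Z x) - (\<Phi> x ** U x ** Z x) ** M x"
    by (simp add: bounded_bilinear.add_left[OF bounded_bilinear_matrix_mult] matrix_add_ldistrib
        matrix_mult_uminus_right matrix_mul_assoc inverse)
  ultimately show ?thesis by simp
qed

lemma norm_conjugated_perturbation_le:
  fixes \<Phi> Z \<Theta> :: "real \<Rightarrow> complex^'n^'n"
  assumes \<Phi>Z: "\<And>x y. x \<le> 0 \<Longrightarrow> y \<le> 0 \<Longrightarrow> norm (\<Phi> x ** Z y) \<le> K * exp (a * \<bar>x - y\<bar>)"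
    and \<Phi>_0: "\<Phi> 0 = mat 1" and Z_0: "Z 0 = mat 1"
    and \<Theta>: "\<And>t. t \<le> 0 \<Longrightarrow> norm (\<Theta> t) \<le> c * exp (2 * \<gamma> * t)"
    and a: "0 \<le> a" "2 * a \<le> \<gamma>" and t: "t \<le> 0"
  shows "norm (Z t ** \<Theta> t ** \<Phi> t) \<le> K^2 * c * exp (\<gamma> * t)"
proof -
  have K: "K \<ge> 0" using \<Phi>Z[of 0 0, simplified] norm_ge_zero[of "\<Phi> 0 ** Z 0"] by linarith
  have c: "c \<ge> 0" using \<Theta>[of 0, simplified] norm_ge_zero[of "\<Theta> 0"] by linarith
  have "norm (Z t ** \<Theta> t ** \<Phi> t) \<le> norm (\<Phi> 0 ** Z t) * norm (\<Theta> t) * norm (\<Phi> t ** Z 0)"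
    using norm_matrix_mult3_le by (simp add: \<Phi>_0 Z_0)
  also have "\<dots> \<le> (K * exp (a * (- t))) * (c * exp (2 * \<gamma> * t)) * (K * exp (a * (- t)))"
    using \<Phi>Z[of 0 t] \<Phi>Z[of t 0] \<Theta>[OF t] t K c by (intro mult_mono) auto
  also have "\<dots> = K^2 * c * exp (2 * (\<gamma> - a) * t)"
    by (simp add: power2_eq_square algebra_simps flip: exp_add)
  also have "\<dots> \<le> K^2 * c * exp (\<gamma> * t)"
    using a t K c by (intro mult_left_mono) (auto simp: mult_le_cancel_right)
  finally show ?thesis .
qed

text \<open>The three factors of \<open>(\<Phi>(x) Z(s)) \<Theta>(s) (\<Phi>(s) U(s) Z(x))\<close> are bounded by \<open>K exp(a (x - s))\<close>,
  \<open>c exp(2 \<gamma> s)\<close> and \<open>K\<^sup>2 K' exp(-a (s + x))\<close>: the growth of \<open>\<Phi>(x)\<close> and \<open>Z(x)\<close> cancels, leaving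
  \<open>exp(2 (\<gamma> - a) s)\<close>.\<close>

lemma norm_conjugated_increment_le:
  fixes \<Phi> Z \<Theta> U :: "real \<Rightarrow> complex^'n^'n"
  assumes \<Phi>Z: "\<And>x y. x \<le> 0 \<Longrightarrow> y \<le> 0 \<Longrightarrow> norm (\<Phi> x ** Z y) \<le> K * exp (a * \<bar>x - y\<bar>)"
    and \<Phi>_0: "\<Phi> 0 = mat 1" and Z_0: "Z 0 = mat 1" and U_bound: "\<And>t. t \<le> 0 \<Longrightarrow> norm (U t) \<le> K'"
    and \<Theta>: "\<And>t. t \<le> 0 \<Longrightarrow> norm (\<Theta> t) \<le> c * exp (2 * \<gamma> * t)"
    and a: "0 \<le> a" "2 * a \<le> \<gamma>" and s: "s \<le> x" and x: "x \<le> 0"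
  shows "norm (\<Phi> x ** (Z s ** \<Theta> s ** \<Phi> s ** U s) ** Z x) \<le> K^3 * K' * c * exp (\<gamma> * s)"
proof -
  have K: "K \<ge> 0" using \<Phi>Z[of 0 0, simplified] norm_ge_zero[of "\<Phi> 0 ** Z 0"] by linarith
  have c: "c \<ge> 0" using \<Theta>[of 0, simplified] norm_ge_zero[of "\<Theta> 0"] by linarith
  have K': "K' \<ge> 0" using U_bound[of 0, simplified] norm_ge_zero[of "U 0"] by linarith
  have "norm (\<Phi> s ** U s ** Z x) \<le> norm (\<Phi> s ** Z 0) * norm (U s) * norm (\<Phi> 0 ** Z x)"
    using norm_matrix_mult3_le[of "\<Phi> s ** Z 0" "U s" "\<Phi> 0 ** Z x"] by (simp add: \<Phi>_0 Z_0)
  also have "\<dots> \<le> (K * exp (a * (- s))) * K' * (K * exp (a * (- x)))"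
    using \<Phi>Z[of s 0] \<Phi>Z[of 0 x] U_bound[of s] s x K K' by (intro mult_mono) auto
  finally have outer: "norm (\<Phi> s ** U s ** Z x) \<le> (K * exp (a * (- s))) * K' * (K * exp (a * (- x)))" .
  have "\<Phi> x ** (Z s ** \<Theta> s ** \<Phi> s ** U s) ** Z x = (\<Phi> x ** Z s) ** \<Theta> s ** (\<Phi> s ** U s ** Z x)"
    by (simp add: matrix_mul_assoc)
  then have "norm (\<Phi> x ** (Z s ** \<Theta> s ** \<Phi> s ** U s) ** Z x)
      \<le> norm (\<Phi> x ** Z s) * norm (\<Theta> s) * norm (\<Phi> s ** U s ** Z x)"
    by (simp only: norm_matrix_mult3_le)
  also have "\<dots> \<le> (K * exp (a * (x - s))) * (c * exp (2 * \<gamma> * s))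
      * ((K * exp (a * (- s))) * K' * (K * exp (a * (- x))))"
    using \<Phi>Z[of x s] \<Theta>[of s] outer s x K c by (intro mult_mono) auto
  also have "\<dots> = K^3 * K' * c * exp (2 * (\<gamma> - a) * s)"
    by (simp add: power3_eq_cube algebra_simps flip: exp_add)
  also have "\<dots> \<le> K^3 * K' * c * exp (\<gamma> * s)"
    using a s x K K' c by (intro mult_left_mono) (auto simp: mult_le_cancel_right)
  finally show ?thesis .
qed

lemma norm_conjugation_minus_identity_le:
  fixes \<Phi> Z \<Theta> U :: "real \<Rightarrow> complex^'n^'n"
  assumes \<Phi>Z: "\<And>x y. x \<le> 0 \<Longrightarrow> y \<le> 0 \<Longrightarrow> norm (\<Phi> x ** Z y) \<le> K * exp (a * \<bar>x - y\<bar>)"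
    and \<Phi>_0: "\<Phi> 0 = mat 1" and Z_0: "Z 0 = mat 1" and inverse: "\<Phi> x ** Z x = mat 1"
    and U: "\<And>t. t \<le> 0 \<Longrightarrow> (U has_vector_derivative (Z t ** \<Theta> t ** \<Phi> t) ** U t) (at t within {..0})"
    and U_lim: "(\<lambda>n. U (- real n)) \<longlonglongrightarrow> mat 1" and U_bound: "\<And>t. t \<le> 0 \<Longrightarrow> norm (U t) \<le> K'"
    and \<Theta>: "\<And>t. t \<le> 0 \<Longrightarrow> norm (\<Theta> t) \<le> c * exp (2 * \<gamma> * t)"
    and a: "0 \<le> a" "2 * a \<le> \<gamma>" and \<gamma>: "\<gamma> > 0" and x: "x \<le> 0"
  shows "norm (\<Phi> x ** U x ** Z x - mat 1) \<le> K^3 * K' * c / \<gamma> * exp (\<gamma> * x)"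
proof -
  have K: "K \<ge> 0" using \<Phi>Z[of 0 0, simplified] norm_ge_zero[of "\<Phi> 0 ** Z 0"] by linarith
  have c: "c \<ge> 0" using \<Theta>[of 0, simplified] norm_ge_zero[of "\<Theta> 0"] by linarith
  have K': "K' \<ge> 0" using U_bound[of 0, simplified] norm_ge_zero[of "U 0"] by linarith
  define g where "g s = K^3 * K' * c / \<gamma> * exp (\<gamma> * s)" for s
  have near: "norm (\<Phi> x ** U x ** Z x - \<Phi> x ** U (- real n) ** Z x) \<le> g x" if n: "- real n \<le> x" for n
  proof -
    have "norm (\<Phi> x ** U x ** Z x - \<Phi> x ** U (- real n) ** Z x) \<le> g x - g (- real n)"
    proof (rule norm_diff_le_real_derivative_bound[OF n])
      fix s assume s: "s \<in> {- real n..x}"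
      then have s0: "s \<le> 0" using x by auto
      have "((\<lambda>s. \<Phi> x ** U s ** Z x) has_vector_derivative \<Phi> x ** (Z s ** \<Theta> s ** \<Phi> s ** U s) ** Z x)
          (at s within {..0})"
        using bounded_bilinear.has_vector_derivative[OF bounded_bilinear_matrix_mult
            bounded_bilinear.has_vector_derivative[OF bounded_bilinear_matrix_mult
              has_vector_derivative_const[of "\<Phi> x"] U[OF s0]] has_vector_derivative_const[of "Z x"]]
        by simp
      then show "((\<lambda>s. \<Phi> x ** U s ** Z x) has_vector_derivative \<Phi> x ** (Z s ** \<Theta> s ** \<Phi> s ** U s) ** Z x)
          (at s within {- real n..x})"
        by (rule has_vector_derivative_within_subset) (use x in auto)
      show "(g has_real_derivative K^3 * K' * c * exp (\<gamma> * s)) (at s within {- real n..x})"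
        unfolding g_def using \<gamma> by (auto intro!: derivative_eq_intros)
      show "norm (\<Phi> x ** (Z s ** \<Theta> s ** \<Phi> s ** U s) ** Z x) \<le> K^3 * K' * c * exp (\<gamma> * s)"
        using norm_conjugated_increment_le[OF \<Phi>Z \<Phi>_0 Z_0 U_bound \<Theta> a _ x] s by auto
    qed
    also have "\<dots> \<le> g x" using K K' c \<gamma> by (simp add: g_def)
    finally show ?thesis .
  qed
  have "norm (\<Phi> x ** U x ** Z x - mat 1) \<le> g x"
  proof (rule LIMSEQ_le_const2)
    have "(\<lambda>n. \<Phi> x ** U (- real n) ** Z x) \<longlonglongrightarrow> \<Phi> x ** mat 1 ** Z x"
      by (intro bounded_bilinear.tendsto[OF bounded_bilinear_matrix_mult] tendsto_const U_lim)
    then show "(\<lambda>n. norm (\<Phi> x ** U x ** Z x - \<Phi> x ** U (- real n) ** Z x)) \<longlonglongrightarrow> norm (\<Phi> x ** U x ** Z x - mat 1)"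
      by (intro tendsto_intros) (simp add: inverse)
    obtain n0 :: nat where "- x \<le> real n0" using real_arch_simple by blast
    then show "\<exists>n0. \<forall>n\<ge>n0. norm (\<Phi> x ** U x ** Z x - \<Phi> x ** U (- real n) ** Z x) \<le> g x"
      by (intro exI[of _ n0] allI impI near) auto
  qed
  then show ?thesis by (simp add: g_def)
qed

lemma conjugating_transformation_exists:
  fixes M \<Theta> :: "real \<Rightarrow> complex^'n^'n"
  assumes C: "C > 0" and \<theta>: "\<theta> > 0" and \<epsilon>: "\<epsilon> > 0" and d: "0 \<le> d" "d \<le> \<theta> / 4"
    and M_cont: "continuous_on {..0} M" and \<Theta>_cont: "continuous_on {..0} \<Theta>"
    and \<Theta>: "\<And>x. x \<le> 0 \<Longrightarrow> norm (\<Theta> x) \<le> C * \<epsilon>\<^sup>2 * exp (- \<theta> * \<epsilon> * \<bar>x\<bar>)"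
    and Re_M: "\<And>x. x \<le> 0 \<Longrightarrow> norm (Re_mat (M x)) \<le> \<epsilon> * d + C * \<epsilon> * exp (- \<theta> * \<epsilon> * \<bar>x\<bar>)"
    and K: "norm (mat 1 :: complex^'n^'n) * exp (C / \<theta>) \<le> K"
    and small: "4 * K^2 * C * \<epsilon> * norm (mat 1 :: complex^'n^'n) * exp 1 \<le> \<theta>"
  obtains P where
    "\<And>x. x \<le> 0 \<Longrightarrow> norm (P x - mat 1)
       \<le> 2 * K^3 * norm (mat 1 :: complex^'n^'n) * exp 1 * C / \<theta> * \<epsilon> * exp (\<theta> * \<epsilon> * x / 2)"
    "\<And>x. x \<le> 0 \<Longrightarrow> (P has_vector_derivative (M x + \<Theta> x) ** P x - P x ** M x) (at x within {..0})"
proof -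
  define N where "N = norm (mat 1 :: complex^'n^'n)"
  define \<gamma> where "\<gamma> = \<theta> * \<epsilon> / 2"
  have \<gamma>: "\<gamma> > 0" using \<theta> \<epsilon> by (simp add: \<gamma>_def)
  obtain \<Phi> Z where \<Phi>_0: "\<Phi> 0 = mat 1" and Z_0: "Z 0 = mat 1"
    and \<Phi>_cont: "continuous_on {..0} \<Phi>" and Z_cont: "continuous_on {..0} Z"
    and \<Phi>: "\<And>x. x \<le> 0 \<Longrightarrow> (\<Phi> has_vector_derivative M x ** \<Phi> x) (at x within {..0})"
    and Z: "\<And>x. x \<le> 0 \<Longrightarrow> (Z has_vector_derivative - (Z x ** M x)) (at x within {..0})"
    and inverse: "\<And>x. x \<le> 0 \<Longrightarrow> \<Phi> x ** Z x = mat 1"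
    using fundamental_matrices_exist[OF M_cont] by blast
  have \<Phi>Z: "norm (\<Phi> x ** Z y) \<le> K * exp (\<epsilon> * d * \<bar>x - y\<bar>)" if xy: "x \<le> 0" "y \<le> 0" for x y
  proof -
    have "norm (\<Phi> x ** Z y) \<le> N * exp (\<epsilon> * d * \<bar>x - y\<bar> + C * \<epsilon> / (\<theta> * \<epsilon>))"
      unfolding N_def
      by (rule norm_fundamental_matrix_mult_inverse_le[where M = M and \<Phi> = \<Phi> and Z = Z
            and \<alpha> = "\<epsilon> * d" and \<beta> = "C * \<epsilon>" and \<gamma> = "\<theta> * \<epsilon>", OF \<Phi> inverse[OF xy(2)] _ _ _ _ xy])
         (use Re_M \<epsilon> d C \<theta> in auto)
    also have "\<dots> \<le> K * exp (\<epsilon> * d * \<bar>x - y\<bar>)"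
      using K \<epsilon> by (simp add: N_def exp_add)
    finally show ?thesis .
  qed
  have \<Theta>': "norm (\<Theta> t) \<le> C * \<epsilon>\<^sup>2 * exp (2 * \<gamma> * t)" if "t \<le> 0" for t
    using \<Theta>[OF that] that by (simp add: \<gamma>_def)
  have a: "0 \<le> \<epsilon> * d" "2 * (\<epsilon> * d) \<le> \<gamma>" using \<epsilon> d by (auto simp: \<gamma>_def)
  have B_cont: "continuous_on {..0} (\<lambda>t. Z t ** \<Theta> t ** \<Phi> t)"
    by (intro bounded_bilinear.continuous_on[OF bounded_bilinear_matrix_mult] Z_cont \<Theta>_cont \<Phi>_cont)
  have "2 * (K^2 * (C * \<epsilon>\<^sup>2)) * N * exp 1 \<le> \<gamma>"
    using small \<epsilon> by (simp add: \<gamma>_def N_def power2_eq_square field_simps)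
  then obtain U where U: "\<And>x. x \<le> 0 \<Longrightarrow> (U has_vector_derivative (Z x ** \<Theta> x ** \<Phi> x) ** U x) (at x within {..0})"
    and U_lim: "(\<lambda>n. U (- real n)) \<longlonglongrightarrow> mat 1" and U_bound: "\<And>x. x \<le> 0 \<Longrightarrow> norm (U x) \<le> N * exp 1"
    using solution_tending_to_identity_exists[OF B_cont norm_conjugated_perturbation_le[OF \<Phi>Z \<Phi>_0 Z_0 \<Theta>' a] \<gamma>]
    unfolding N_def by blast
  show ?thesis
  proof (rule that[of "\<lambda>x. \<Phi> x ** U x ** Z x"])
    fix x :: real assume x: "x \<le> 0"
    show "norm (\<Phi> x ** U x ** Z x - mat 1)
       \<le> 2 * K^3 * norm (mat 1 :: complex^'n^'n) * exp 1 * C / \<theta> * \<epsilon> * exp (\<theta> * \<epsilon> * x / 2)"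
      using norm_conjugation_minus_identity_le[OF \<Phi>Z \<Phi>_0 Z_0 inverse[OF x] U U_lim U_bound \<Theta>' a \<gamma> x] \<epsilon>
      by (simp add: \<gamma>_def N_def power2_eq_square field_simps)
    show "((\<lambda>x. \<Phi> x ** U x ** Z x) has_vector_derivative
        (M x + \<Theta> x) ** (\<Phi> x ** U x ** Z x) - (\<Phi> x ** U x ** Z x) ** M x) (at x within {..0})"
      by (rule has_vector_derivative_conjugation[where M = M and \<Theta> = \<Theta>, OF \<Phi>[OF x] Z[OF x] U[OF x] inverse[OF x]])
  qed
qed

lemma near_identity_conjugacy_exists:
  fixes M \<Theta> :: "real \<Rightarrow> complex^'n^'n"
  assumes C: "C > 0" and \<theta>: "\<theta> > 0" and \<epsilon>: "\<epsilon> > 0" and d: "0 \<le> d" "d \<le> \<theta> / 4"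
    and M_cont: "continuous_on {..0} M" and \<Theta>_cont: "continuous_on {..0} \<Theta>"
    and \<Theta>: "\<And>x. x \<le> 0 \<Longrightarrow> norm (\<Theta> x) \<le> C * \<epsilon>\<^sup>2 * exp (- \<theta> * \<epsilon> * \<bar>x\<bar>)"
    and Re_M: "\<And>x. x \<le> 0 \<Longrightarrow> norm (Re_mat (M x)) \<le> \<epsilon> * d + C * \<epsilon> * exp (- \<theta> * \<epsilon> * \<bar>x\<bar>)"
    and K: "norm (mat 1 :: complex^'n^'n) * exp (C / \<theta>) \<le> K"
    and small: "4 * K^2 * C * \<epsilon> * norm (mat 1 :: complex^'n^'n) * exp 1 \<le> \<theta>"
    and C1: "2 * K^3 * norm (mat 1 :: complex^'n^'n) * exp 1 * C / \<theta> \<le> C1" and C1_small: "C1 * \<epsilon> < 1"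
  shows "\<exists>\<Psi>. (\<forall>x \<le> 0. invertible (mat 1 + \<Psi> x)) \<and>
     (\<forall>x \<le> 0. norm (\<Psi> x) \<le> C1 * \<epsilon> * exp (- \<theta> * \<epsilon> * \<bar>x\<bar> / 2)) \<and>
     (\<forall>x \<le> 0. ((\<lambda>y. mat 1 + \<Psi> y) has_vector_derivative
        ((M x + \<Theta> x) ** (mat 1 + \<Psi> x) - (mat 1 + \<Psi> x) ** M x)) (at x within {..0}))"
proof -
  obtain P where P_near: "\<And>x. x \<le> 0 \<Longrightarrow> norm (P x - mat 1)
       \<le> 2 * K^3 * norm (mat 1 :: complex^'n^'n) * exp 1 * C / \<theta> * \<epsilon> * exp (\<theta> * \<epsilon> * x / 2)"
    and P: "\<And>x. x \<le> 0 \<Longrightarrow> (P has_vector_derivative (M x + \<Theta> x) ** P x - P x ** M x) (at x within {..0})"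
    using conjugating_transformation_exists[OF C \<theta> \<epsilon> d M_cont \<Theta>_cont \<Theta> Re_M K small] by blast
  have near: "norm (P x - mat 1) \<le> C1 * \<epsilon> * exp (\<theta> * \<epsilon> * x / 2)" if x: "x \<le> 0" for x
    using P_near[OF x] mult_right_mono[OF C1, of "\<epsilon> * exp (\<theta> * \<epsilon> * x / 2)"] \<epsilon>
    by (simp add: mult.assoc)
  have "0 \<le> C1 * \<epsilon>" using order_trans[OF norm_ge_zero near[OF order_refl]] by simp
  then have "C1 * \<epsilon> * exp (\<theta> * \<epsilon> * x / 2) \<le> C1 * \<epsilon>" if "x \<le> 0" for x
    using that \<theta> \<epsilon> by (intro mult_left_le) (auto simp: mult_nonneg_nonpos)
  with near C1_small have invertible: "invertible (P x)" if "x \<le> 0" for x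
    using that invertible_mat_1_plus_if_norm_less_1[of "P x - mat 1"] by force
  show ?thesis
    by (intro exI[of _ "\<lambda>x. P x - mat 1"]) (simp add: invertible near P)
qed

theorem lemma4p3:
  fixes Par :: "(real^'m) set"
    and M \<Theta> :: "real^'m \<Rightarrow> real \<Rightarrow> real \<Rightarrow> complex^'n^'n"
    and \<delta> :: "real^'m \<Rightarrow> real \<Rightarrow> real"
    and C \<theta> :: real
  assumes C_pos: "C > 0" and theta_pos: "\<theta> > 0"
    and M_cont: "\<And>p \<epsilon>. p \<in> Par \<Longrightarrow> \<epsilon> > 0 \<Longrightarrow> continuous_on {..0} (M p \<epsilon>)"
    and Theta_cont: "\<And>p \<epsilon>. p \<in> Par \<Longrightarrow> \<epsilon> > 0 \<Longrightarrow> continuous_on {..0} (\<Theta> p \<epsilon>)"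
    and delta_nonneg: "\<And>p \<epsilon>. p \<in> Par \<Longrightarrow> \<epsilon> > 0 \<Longrightarrow> \<delta> p \<epsilon> \<ge> 0"
    and Theta_bound: "\<And>p \<epsilon> x. p \<in> Par \<Longrightarrow> \<epsilon> > 0 \<Longrightarrow> x \<le> 0 \<Longrightarrow>
        norm (\<Theta> p \<epsilon> x) \<le> C * \<epsilon>\<^sup>2 * exp (- \<theta> * \<epsilon> * \<bar>x\<bar>)"
    and ReM_bound: "\<And>p \<epsilon> x. p \<in> Par \<Longrightarrow> \<epsilon> > 0 \<Longrightarrow> x \<le> 0 \<Longrightarrow>
        norm (Re_mat (M p \<epsilon> x)) \<le> \<epsilon> * \<delta> p \<epsilon> + C * \<epsilon> * exp (- \<theta> * \<epsilon> * \<bar>x\<bar>)"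
  shows "\<exists>\<delta>s > 0. \<exists>\<epsilon>0 > 0. \<exists>C1 > 0. \<forall>p \<in> Par. \<forall>\<epsilon>. 0 < \<epsilon> \<and> \<epsilon> < \<epsilon>0 \<and> \<delta> p \<epsilon> \<le> \<delta>s \<longrightarrow>
     (\<exists>\<Psi> :: real \<Rightarrow> complex^'n^'n.
        (\<forall>x \<le> 0. invertible (mat 1 + \<Psi> x)) \<and>
        (\<forall>x \<le> 0. norm (\<Psi> x) \<le> C1 * \<epsilon> * exp (- \<theta> * \<epsilon> * \<bar>x\<bar> / 2)) \<and>
        (\<forall>x \<le> 0. ((\<lambda>y. mat 1 + \<Psi> y) has_vector_derivative
            ((M p \<epsilon> x + \<Theta> p \<epsilon> x) ** (mat 1 + \<Psi> x) - (mat 1 + \<Psi> x) ** M p \<epsilon> x))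
            (at x within {..0})))"
proof -
  define N where "N = norm (mat 1 :: complex^'n^'n)"
  define K where "K = N * exp (C / \<theta>)"
  define C1 where "C1 = 2 * K^3 * N * exp 1 * C / \<theta>"
  define \<epsilon>0 where "\<epsilon>0 = min (\<theta> / (4 * K^2 * C * N * exp 1)) (1 / C1)"
  have N: "N \<ge> 1" unfolding N_def by (rule one_le_norm_mat_1)
  then have K: "K > 0" and C1: "C1 > 0" using C_pos theta_pos by (simp_all add: K_def C1_def)
  then have \<epsilon>0: "\<epsilon>0 > 0" using N C_pos theta_pos by (simp add: \<epsilon>0_def)
  have "\<exists>\<Psi>. (\<forall>x \<le> 0. invertible (mat 1 + \<Psi> x)) \<and>
     (\<forall>x \<le> 0. norm (\<Psi> x) \<le> C1 * \<epsilon> * exp (- \<theta> * \<epsilon> * \<bar>x\<bar> / 2)) \<and>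
     (\<forall>x \<le> 0. ((\<lambda>y. mat 1 + \<Psi> y) has_vector_derivative
        ((M p \<epsilon> x + \<Theta> p \<epsilon> x) ** (mat 1 + \<Psi> x) - (mat 1 + \<Psi> x) ** M p \<epsilon> x)) (at x within {..0}))"
    if p: "p \<in> Par" and \<epsilon>: "0 < \<epsilon>" "\<epsilon> < \<epsilon>0" "\<delta> p \<epsilon> \<le> \<theta> / 4" for p \<epsilon>
  proof (rule near_identity_conjugacy_exists[OF C_pos theta_pos \<epsilon>(1) delta_nonneg[OF p \<epsilon>(1)] \<epsilon>(3)
        M_cont[OF p \<epsilon>(1)] Theta_cont[OF p \<epsilon>(1)] Theta_bound[OF p \<epsilon>(1)] ReM_bound[OF p \<epsilon>(1)]])
    have "0 < 4 * K^2 * C * N * exp 1" using K N C_pos by simp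
    then have "\<epsilon> * (4 * K^2 * C * N * exp 1) \<le> \<theta>"
      using \<epsilon>(2) by (simp add: \<epsilon>0_def pos_less_divide_eq)
    then show "4 * K^2 * C * \<epsilon> * norm (mat 1 :: complex^'n^'n) * exp 1 \<le> \<theta>"
      by (simp add: N_def mult_ac)
    show "C1 * \<epsilon> < 1" using \<epsilon> C1 by (simp add: \<epsilon>0_def field_simps)
  qed (simp_all add: K_def C1_def N_def)
  moreover have "\<theta> / 4 > 0" using theta_pos by simp
  ultimately show ?thesis using \<epsilon>0 C1 by blast
qed

end
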